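(* For any stochastic CA $\mathcal{A}=(Q,R,V,V',f)$ there is a plain probabilistic cellular automaton (PCA) $\mathcal{B}$ such that $\mathcal{A}\sqsubseteq^S_i\mathcal{B}$.
   Context: A stochastic CA is $(Q,R,V,V',f)$ with $Q$ finite states, $R$ finite random symbols, $V=\{v_1,\dots,v_r\}$, $V'=\{v'_1,\dots,v'_{r'}\}$ finite subsets of $\mathbb{Z}$, $f:Q^r\times R^{r'}\to Q$; explicit global function $F(c,s)_z=f((c_{z+v_1},\dots,c_{z+v_r}),(s_{z+v'_1},\dots,s_{z+v'_{r'}}))$ for $c\in Q^{\mathbb{Z}},s\in R^{\mathbb{Z}}$. It is a PCA if $V'=\{0\}$. $\nu_R$ is the uniform Bernoulli measure on $R^{\mathbb{Z}}$; the stochastic global function $S_F$ maps $c$ to the law of $F(c,s)$, $s\sim\nu_R$ (i.e. $S_F(c)([u]_z)=\nu_R\{s:F(c,s)\in[u]_z\}$ on cylinders $[u]_z$). Iterates: $F^{t+1}(c,s^1,\dots,s^{t+1})=F(F^t(c,s^1,\dots,s^t),s^{t+1})$, $F^0(c)=c$. Restriction: if $i:Q'\to Q$ is injective and $Y=i(Q')^{\mathbb{Z}}$ satisfies $F(Y,R^{\mathbb{Z}})\subseteq Y$, the $i$-restriction of $\mathcal{A}$ is the stochastic CA with states $Q'$, random symbols $R$ and explicit global function $F_i(c,s)=I^{-1}(F(I(c),s))$, $I$ the cellwise extension of $i$. Rescaling: for $m,t\ge1$, $k\in\mathbb{Z}$, the rescaling $\mathcal{A}^{\langle m,t,k\rangle}$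 has states $Q^m$, random symbols $(R^m)^t$, and explicit global function $F^{\langle m,t,k\rangle}(c,s)=b_m\circ\sigma_k\circ F^t(b_m^{-1}(c),b_m^{-1}(s^1),\dots,b_m^{-1}(s^t))$, where $s^i\in(R^m)^{\mathbb{Z}}$ with $s^i_j=(s_j)_i$, $\sigma_k(c)_z=c_{z+k}$, and $b_m(c)_z=(c_{mz},\dots,c_{mz+m-1})$. $\mathcal{A}_1\sqsubseteq^S_i\mathcal{A}_2$ means there exist $m_1,m_2,t_1,t_2,k_1,k_2$ and an $i$-restriction $\mathcal{C}$ of $\mathcal{A}_2^{\langle m_2,t_2,k_2\rangle}$ such that $\mathcal{A}_1^{\langle m_1,t_1,k_1\rangle}$ and $\mathcal{C}$ have the same stochastic global function. *)

theory Defs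
  imports "HOL-Probability.Probability"
begin

text \<open>A stochastic CA (Q,R,V,V',f). Neighbourhoods are given as lists of distinct
  integers (v_1,...,v_r), and the local rule takes the tuples of states / random
  symbols as lists in that order.\<close>
record ('q, 'r) sca =
  sQ  :: "'q set"
  sR  :: "'r set"
  sV  :: "int list"
  sV' :: "int list"
  sf  :: "'q list \<Rightarrow> 'r list \<Rightarrow> 'q"

definition is_sca :: "('q, 'r) sca \<Rightarrow> bool" where
  "is_sca A \<longleftrightarrow> finite (sQ A) \<and> sQ A \<noteq> {} \<and> finite (sR A) \<and> sR A \<noteq> {}
     \<and> distinct (sV A) \<and> distinct (sV' A)
     \<and> (\<forall>xs ys. length xs = length (sV A) \<and> set xs \<subseteq> sQ A
              \<and> length ys = length (sV' A) \<and> set ys \<subseteq> sR A \<longrightarrow> sf A xs ys \<in> sQ A)"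

definition is_pca :: "('q, 'r) sca \<Rightarrow> bool" where
  "is_pca A \<longleftrightarrow> is_sca A \<and> sV' A = [0]"

definition glob :: "('q, 'r) sca \<Rightarrow> (int \<Rightarrow> 'q) \<Rightarrow> (int \<Rightarrow> 'r) \<Rightarrow> (int \<Rightarrow> 'q)" where
  "glob A c s = (\<lambda>z. sf A (map (\<lambda>v. c (z + v)) (sV A)) (map (\<lambda>v. s (z + v)) (sV' A)))"

text \<open>A "system" given by its state set, random symbol set and explicit global function
  (this is all that rescalings / restrictions are specified by).\<close>
record ('q, 'r) gsys =
  gQ :: "'q set"
  gR :: "'r set"
  gF :: "(int \<Rightarrow> 'q) \<Rightarrow> (int \<Rightarrow> 'r) \<Rightarrow> (int \<Rightarrow> 'q)"

definition sys_of :: "('q, 'r) sca \<Rightarrow> ('q, 'r) gsys" where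
  "sys_of A = \<lparr>gQ = sQ A, gR = sR A, gF = glob A\<rparr>"

definition configs :: "'a set \<Rightarrow> (int \<Rightarrow> 'a) set" where
  "configs S = {c. \<forall>z. c z \<in> S}"

definition sgf :: "('q, 'r) gsys \<Rightarrow> (int \<Rightarrow> 'q) \<Rightarrow> (int \<Rightarrow> 'q) measure" where
  "sgf G c = distr (PiM (UNIV :: int set) (\<lambda>_. uniform_count_measure (gR G)))
                   (PiM (UNIV :: int set) (\<lambda>_. count_space (gQ G)))
                   (\<lambda>s. gF G c s)"

text \<open>Iterates: F^0(c) = c, F^(t+1)(c,s^1..s^(t+1)) = F(F^t(c,s^1..s^t), s^(t+1));
  here ss n plays the role of s^(n+1).\<close>
primrec iterF :: "((int \<Rightarrow> 'q) \<Rightarrow> (int \<Rightarrow> 'r) \<Rightarrow> (int \<Rightarrow> 'q)) \<Rightarrow> (int \<Rightarrow> 'q)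
                   \<Rightarrow> (nat \<Rightarrow> int \<Rightarrow> 'r) \<Rightarrow> nat \<Rightarrow> (int \<Rightarrow> 'q)" where
  "iterF F c ss 0 = c"
| "iterF F c ss (Suc t) = F (iterF F c ss t) (ss t)"

definition tuples :: "nat \<Rightarrow> 'a set \<Rightarrow> 'a list set" where
  "tuples m S = {xs. length xs = m \<and> set xs \<subseteq> S}"

definition block :: "nat \<Rightarrow> (int \<Rightarrow> 'a) \<Rightarrow> (int \<Rightarrow> 'a list)" where
  "block m c = (\<lambda>z. map (\<lambda>j. c (int m * z + int j)) [0..<m])"

definition unblock :: "nat \<Rightarrow> (int \<Rightarrow> 'a list) \<Rightarrow> (int \<Rightarrow> 'a)" where
  "unblock m c = (\<lambda>z. c (z div int m) ! nat (z mod int m))"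

definition shift :: "int \<Rightarrow> (int \<Rightarrow> 'a) \<Rightarrow> (int \<Rightarrow> 'a)" where
  "shift k c = (\<lambda>z. c (z + k))"

text \<open>Rescaling A^<m,t,k>: states Q^m, random symbols (R^m)^t (a list of length t of
  lists of length m); s^i_j = (s_j)_i.\<close>
definition rescale :: "('q, 'r) sca \<Rightarrow> nat \<Rightarrow> nat \<Rightarrow> int \<Rightarrow> ('q list, 'r list list) gsys" where
  "rescale A m t k = \<lparr>gQ = tuples m (sQ A), gR = tuples t (tuples m (sR A)),
     gF = (\<lambda>c s. block m (shift k
             (iterF (glob A) (unblock m c) (\<lambda>n. unblock m (\<lambda>j. s j ! n)) t)))\<rparr>"

definition is_restriction :: "('q, 'r) gsys \<Rightarrow> 'a set \<Rightarrow> ('a \<Rightarrow> 'q) \<Rightarrow> bool" where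
  "is_restriction G Q' i \<longleftrightarrow> inj_on i Q' \<and> i ` Q' \<subseteq> gQ G
     \<and> (\<forall>c \<in> configs (i ` Q'). \<forall>s \<in> configs (gR G). gF G c s \<in> configs (i ` Q'))"

definition restrict :: "('q, 'r) gsys \<Rightarrow> 'a set \<Rightarrow> ('a \<Rightarrow> 'q) \<Rightarrow> ('a, 'r) gsys" where
  "restrict G Q' i = \<lparr>gQ = Q', gR = gR G,
     gF = (\<lambda>c s. (\<lambda>z. the_inv_into Q' i (gF G (i \<circ> c) s z)))\<rparr>"

definition simulates_S :: "('q, 'r) sca \<Rightarrow> ('a, 'b) sca \<Rightarrow> ('q list \<Rightarrow> 'a list) \<Rightarrow> bool" where
  "simulates_S A1 A2 i \<longleftrightarrow> (\<exists>m1 m2 t1 t2 k1 k2.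
     m1 \<ge> 1 \<and> m2 \<ge> 1 \<and> t1 \<ge> 1 \<and> t2 \<ge> 1
     \<and> is_restriction (rescale A2 m2 t2 k2) (gQ (rescale A1 m1 t1 k1)) i
     \<and> (\<forall>c \<in> configs (gQ (rescale A1 m1 t1 k1)).
          sgf (rescale A1 m1 t1 k1) c
          = sgf (restrict (rescale A2 m2 t2 k2) (gQ (rescale A1 m1 t1 k1)) i) c))"

end

theory Submission
  imports Defs
begin

text \<open>The PCA B stores randomness in its cells. A cell of B is either fresh, \<open>[Inl q]\<close>, or
  loaded, \<open>[Inl q, Inr r]\<close>. A fresh cell appends the random symbol it draws; a loaded cell
  applies the rule of A to the states and stored symbols of its neighbours at offsets
  \<open>V \<union> V'\<close> and becomes fresh again. Hence two steps of B started from a fresh configuration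
  perform one step of A in which the symbol at offset v is the one drawn by cell \<open>z + v\<close> in the
  first step, while the symbols of the second step are never read. Projecting a pair of
  uniform symbols to its first component is uniform, and this persists coordinatewise on the
  product measure, so the two stochastic global functions agree.\<close>

lemma measurable_PiM_componentwise:
  assumes f: "f \<in> M \<rightarrow>\<^sub>M N"
  shows "(\<lambda>s i. f (s i)) \<in> PiM UNIV (\<lambda>_::'i. M) \<rightarrow>\<^sub>M PiM UNIV (\<lambda>_. N)"
proof (rule measurable_PiM_single')
  show "(\<lambda>s. f (s i)) \<in> PiM UNIV (\<lambda>_. M) \<rightarrow>\<^sub>M N" for i :: 'i
    using measurable_compose[OF measurable_component_singleton[of i UNIV "\<lambda>_. M"] f] by simp
  show "(\<lambda>s i. f (s i)) \<in> space (PiM UNIV (\<lambda>_. M)) \<rightarrow> (\<Pi>\<^sub>E i\<in>UNIV. space N)"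
    using measurable_space[OF f] by (auto simp: space_PiM)
qed

lemma distr_PiM_componentwise:
  assumes M: "prob_space M" and N: "prob_space N" and f: "f \<in> M \<rightarrow>\<^sub>M N"
    and law: "distr M N f = N"
  shows "distr (PiM UNIV (\<lambda>_::'i. M)) (PiM UNIV (\<lambda>_. N)) (\<lambda>s i. f (s i)) = PiM UNIV (\<lambda>_. N)"
    (is "distr ?M ?N ?f = ?N")
proof (rule measure_eqI_PiM_infinite[symmetric, OF refl])
  show "sets (distr ?M ?N ?f) = sets ?N"
    by simp
  interpret prob_space ?N using N by (intro prob_space_PiM) auto
  show "finite_measure ?N" by unfold_locales
  fix J :: "'i set" and A assume J: "finite J" and A: "\<And>i. i \<in> J \<Longrightarrow> A i \<in> sets N"
  have "emeasure ?N (prod_emb UNIV (\<lambda>_. N) J (Pi\<^sub>E J A)) = (\<Prod>j\<in>J. emeasure N (A j))"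
    using N J A by (intro emeasure_PiM_emb) auto
  also have "\<dots> = (\<Prod>j\<in>J. emeasure M (f -` A j \<inter> space M))"
    using A f by (intro prod.cong refl) (metis emeasure_distr law)
  also have "\<dots> = emeasure ?M (prod_emb UNIV (\<lambda>_. M) J (Pi\<^sub>E J (\<lambda>j. f -` A j \<inter> space M)))"
    using M J A f by (intro emeasure_PiM_emb[symmetric]) (auto intro: measurable_sets)
  also have "prod_emb UNIV (\<lambda>_. M) J (Pi\<^sub>E J (\<lambda>j. f -` A j \<inter> space M))
      = ?f -` prod_emb UNIV (\<lambda>_. N) J (Pi\<^sub>E J A) \<inter> space ?M"
    using measurable_space[OF f] by (auto simp: prod_emb_def space_PiM PiE_iff)
  also have "emeasure ?M \<dots> = emeasure (distr ?M ?N ?f) (prod_emb UNIV (\<lambda>_. N) J (Pi\<^sub>E J A))"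
    using J A by (intro emeasure_distr[symmetric] measurable_PiM_componentwise f sets_PiM_I) auto
  finally show "emeasure ?N (prod_emb UNIV (\<lambda>_. N) J (Pi\<^sub>E J A))
      = emeasure (distr ?M ?N ?f) (prod_emb UNIV (\<lambda>_. N) J (Pi\<^sub>E J A))" .
qed

lemma measurable_uniform_count_measure:
  "f \<in> S \<rightarrow> T \<Longrightarrow> f \<in> uniform_count_measure S \<rightarrow>\<^sub>M uniform_count_measure T"
  by (simp add: measurable_cong_sets[OF sets_uniform_count_measure_count_space
        sets_uniform_count_measure_count_space])

lemma card_vimage_equal_fibres:
  assumes "finite X" "finite S" and "\<And>y. y \<in> X \<Longrightarrow> card (f -` {y} \<inter> S) = k"
  shows "card (f -` X \<inter> S) = card X * k"
proof -
  have "f -` X \<inter> S = (\<Union>y\<in>X. f -` {y} \<inter> S)"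
    by auto
  also have "card \<dots> = (\<Sum>y\<in>X. card (f -` {y} \<inter> S))"
    using assms by (intro card_UN_disjoint) auto
  finally show ?thesis
    using assms by simp
qed

lemma distr_uniform_count_measure_equal_fibres:
  assumes S: "finite S" and onto: "f ` S = T"
    and fibres: "\<And>y. y \<in> T \<Longrightarrow> card (f -` {y} \<inter> S) = k"
  shows "distr (uniform_count_measure S) (uniform_count_measure T) f = uniform_count_measure T"
proof (rule measure_eqI)
  have T: "finite T"
    using S onto by blast
  fix X assume "X \<in> sets (distr (uniform_count_measure S) (uniform_count_measure T) f)"
  then have X: "X \<subseteq> T"
    by (simp add: sets_uniform_count_measure)
  have "f -` T \<inter> S = S"
    using onto by blast
  then have card_S: "card S = card T * k"
    using card_vimage_equal_fibres[OF T S fibres] by simp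
  have "emeasure (distr (uniform_count_measure S) (uniform_count_measure T) f) X
      = emeasure (uniform_count_measure S) (f -` X \<inter> S)"
    using X onto
    by (subst emeasure_distr) (auto simp: measurable_uniform_count_measure
        sets_uniform_count_measure space_uniform_count_measure)
  also have "\<dots> = ennreal (real (card (f -` X \<inter> S)) / real (card S))"
    using S by (intro emeasure_uniform_count_measure) auto
  also have "\<dots> = ennreal (real (card X * k) / real (card T * k))"
    using X T fibres by (simp only: card_S card_vimage_equal_fibres[OF finite_subset[OF X T] S] subset_iff)
  also have "\<dots> = ennreal (real (card X) / real (card T))"
  proof (cases "k = 0")
    case True
    then have "T = {}" using card_S S onto by auto
    then show ?thesis using X by simp
  qed simp
  also have "\<dots> = emeasure (uniform_count_measure T) X"
    using X T by (simp add: emeasure_uniform_count_measure)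
  finally show "emeasure (distr (uniform_count_measure S) (uniform_count_measure T) f) X
      = emeasure (uniform_count_measure T) X" .
qed simp

lemma measurable_coordinate_tuple:
  assumes "finite S"
  shows "(\<lambda>s. map (\<lambda>v. s (g v)) L)
    \<in> PiM UNIV (\<lambda>_::'i. uniform_count_measure S) \<rightarrow>\<^sub>M count_space (tuples (length L) S)"
proof (induction L)
  case Nil
  show ?case by (simp add: tuples_def)
next
  case (Cons v L)
  have head: "(\<lambda>s. s (g v)) \<in> PiM UNIV (\<lambda>_::'i. uniform_count_measure S) \<rightarrow>\<^sub>M count_space S"
    using measurable_component_singleton[of "g v" UNIV "\<lambda>_. uniform_count_measure S"]
    by (simp add: measurable_cong_sets[OF refl sets_uniform_count_measure_count_space])
  have tail: "(\<lambda>s. a # map (\<lambda>v. s (g v)) L)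
      \<in> PiM UNIV (\<lambda>_::'i. uniform_count_measure S) \<rightarrow>\<^sub>M count_space (tuples (length (v # L)) S)"
    if "a \<in> S" for a
    using that by (intro measurable_compose[OF Cons.IH]) (auto simp: tuples_def)
  show ?case
    using measurable_compose_countable'[OF tail head] assms by (simp add: countable_finite)
qed

lemma measurable_local_rule:
  assumes "finite S" and h: "\<And>z xs. xs \<in> tuples (length L) S \<Longrightarrow> h z xs \<in> T"
  shows "(\<lambda>s z. h z (map (\<lambda>v. s (z + v)) L))
    \<in> PiM UNIV (\<lambda>_::int. uniform_count_measure S) \<rightarrow>\<^sub>M PiM UNIV (\<lambda>_::int. count_space T)"
proof (rule measurable_PiM_single')
  fix z :: int
  have "h z \<in> count_space (tuples (length L) S) \<rightarrow>\<^sub>M count_space T"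
    using h by simp
  then show "(\<lambda>s. h z (map (\<lambda>v. s (z + v)) L)) \<in> PiM UNIV (\<lambda>_. uniform_count_measure S) \<rightarrow>\<^sub>M count_space T"
    by (rule measurable_compose[OF measurable_coordinate_tuple[OF \<open>finite S\<close>]])
next
  show "(\<lambda>s z. h z (map (\<lambda>v. s (z + v)) L))
      \<in> space (PiM UNIV (\<lambda>_. uniform_count_measure S)) \<rightarrow> (\<Pi>\<^sub>E z\<in>UNIV. space (count_space T))"
  proof (intro funcsetI PiE_I)
    fix s and z :: int assume "s \<in> space (PiM UNIV (\<lambda>_::int. uniform_count_measure S))"
    then have "map (\<lambda>v. s (z + v)) L \<in> tuples (length L) S"
      by (auto simp: space_PiM space_uniform_count_measure tuples_def)
    then show "h z (map (\<lambda>v. s (z + v)) L) \<in> space (count_space T)"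
      using h by simp
  qed simp
qed

lemma sgf_eq_if_factors_through:
  fixes G1 :: "('q, 'r) gsys" and G2 :: "('q, 'b) gsys" and \<pi> :: "'b \<Rightarrow> 'r"
  assumes fin: "finite (gR G2)" and nonempty: "gR G1 \<noteq> {}"
    and onto: "\<pi> ` gR G2 = gR G1"
    and fibres: "\<And>y. y \<in> gR G1 \<Longrightarrow> card (\<pi> -` {y} \<inter> gR G2) = k"
    and states: "gQ G2 = gQ G1"
    and meas: "gF G1 c \<in> PiM UNIV (\<lambda>_::int. uniform_count_measure (gR G1))
                \<rightarrow>\<^sub>M PiM UNIV (\<lambda>_::int. count_space (gQ G1))"
    and factor: "\<And>s. s \<in> configs (gR G2) \<Longrightarrow> gF G2 c s = gF G1 c (\<pi> \<circ> s)"
  shows "sgf G2 c = sgf G1 c"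
proof -
  define \<mu>1 where "\<mu>1 = PiM (UNIV :: int set) (\<lambda>_. uniform_count_measure (gR G1))"
  define \<mu>2 where "\<mu>2 = PiM (UNIV :: int set) (\<lambda>_. uniform_count_measure (gR G2))"
  define N where "N = PiM (UNIV :: int set) (\<lambda>_. count_space (gQ G1))"
  have \<pi>_meas: "\<pi> \<in> uniform_count_measure (gR G2) \<rightarrow>\<^sub>M uniform_count_measure (gR G1)"
    using onto by (intro measurable_uniform_count_measure) blast
  have \<pi>_law: "distr (uniform_count_measure (gR G2)) (uniform_count_measure (gR G1)) \<pi>
      = uniform_count_measure (gR G1)"
    using fin onto fibres by (rule distr_uniform_count_measure_equal_fibres)
  have fin1: "finite (gR G1)" and nonempty2: "gR G2 \<noteq> {}"
    using fin onto nonempty by (metis finite_imageI, blast)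
  have P_meas: "(\<lambda>s i. \<pi> (s i)) \<in> \<mu>2 \<rightarrow>\<^sub>M \<mu>1"
    unfolding \<mu>1_def \<mu>2_def using \<pi>_meas by (rule measurable_PiM_componentwise)
  have P_law: "distr \<mu>2 \<mu>1 (\<lambda>s i. \<pi> (s i)) = \<mu>1"
    unfolding \<mu>1_def \<mu>2_def using fin fin1 nonempty nonempty2 \<pi>_meas \<pi>_law
    by (intro distr_PiM_componentwise prob_space_uniform_count_measure)
  have "sgf G2 c = distr \<mu>2 N (gF G2 c)"
    by (simp add: sgf_def \<mu>2_def N_def states)
  also have "\<dots> = distr \<mu>2 N (\<lambda>s. gF G1 c (\<lambda>i. \<pi> (s i)))"
    using factor by (intro distr_cong)
      (auto simp: \<mu>2_def space_PiM space_uniform_count_measure configs_def comp_def)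
  also have "\<dots> = distr (distr \<mu>2 \<mu>1 (\<lambda>s i. \<pi> (s i))) N (gF G1 c)"
    using meas P_meas by (simp add: distr_distr \<mu>1_def N_def comp_def)
  also have "\<dots> = sgf G1 c"
    unfolding P_law by (simp add: sgf_def \<mu>1_def N_def)
  finally show ?thesis .
qed

lemma nth_in_tuples: "xs \<in> tuples m S \<Longrightarrow> i < m \<Longrightarrow> xs ! i \<in> S"
  by (auto simp: tuples_def)

lemma tuples_Suc_0: "tuples (Suc 0) S = (\<lambda>a. [a]) ` S"
  by (auto simp: tuples_def length_Suc_conv)

lemma tuples_2: "tuples 2 S = (\<lambda>(a, b). [a, b]) ` (S \<times> S)"
  by (auto simp: tuples_def length_Suc_conv numeral_2_eq_2)

lemma configs_image_inj_on:
  assumes "inj_on i Q" and "c \<in> configs (i ` Q)"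
  shows "the_inv_into Q i \<circ> c \<in> configs Q" and "c = i \<circ> (the_inv_into Q i \<circ> c)"
  using assms the_inv_into_into[OF assms(1)] f_the_inv_into_f[OF assms(1)]
  by (auto simp: configs_def)

lemma gQ_rescale [simp]: "gQ (rescale A m t k) = tuples m (sQ A)"
  and gR_rescale [simp]: "gR (rescale A m t k) = tuples t (tuples m (sR A))"
  by (simp_all add: rescale_def)

lemma gQ_restrict [simp]: "gQ (restrict G Q' i) = Q'"
  and gR_restrict [simp]: "gR (restrict G Q' i) = gR G"
  by (simp_all add: restrict_def)

lemma gF_restrict_eqI:
  assumes "inj_on i Q'" and "gF G (i \<circ> c) s = i \<circ> c'" and "c' \<in> configs Q'"
  shows "gF (restrict G Q' i) c s = c'"
  using assms by (auto simp: restrict_def configs_def the_inv_into_f_f)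

lemma sf_map_in_states:
  assumes "is_sca A" and "\<And>v. v \<in> set (sV A) \<Longrightarrow> g v \<in> sQ A"
    and "\<And>v. v \<in> set (sV' A) \<Longrightarrow> h v \<in> sR A"
  shows "sf A (map g (sV A)) (map h (sV' A)) \<in> sQ A"
  using assms unfolding is_sca_def by (simp add: image_subset_iff)

lemma glob_in_configs:
  assumes "is_sca A" and "c \<in> configs (sQ A)" and "s \<in> configs (sR A)"
  shows "glob A c s \<in> configs (sQ A)"
  using assms by (auto simp: glob_def configs_def intro!: sf_map_in_states)

lemma gF_rescale_width_1:
  "gF (rescale A 1 t 0) c s = (\<lambda>z. [iterF (glob A) (\<lambda>z. c z ! 0) (\<lambda>n z. s z ! n ! 0) t z])"
  by (simp add: rescale_def block_def unblock_def shift_def)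

definition pca_nbhd :: "('q, 'r) sca \<Rightarrow> int list" where
  "pca_nbhd A = remdups (0 # sV A @ sV' A)"

text \<open>The \<open>SOME\<close> defaults are only read outside the configurations reachable from
  \<open>pca_embed\<close>; they make the rule of B total on its state set.\<close>

definition symbol_of :: "('q, 'r) sca \<Rightarrow> ('q + 'r) list \<Rightarrow> 'r" where
  "symbol_of A y = (case y of [Inr r] \<Rightarrow> r | _ \<Rightarrow> SOME r. r \<in> sR A)"

definition state_part :: "('q, 'r) sca \<Rightarrow> ('q + 'r) list \<Rightarrow> 'q" where
  "state_part A x = (case x of Inl q # _ \<Rightarrow> q | _ \<Rightarrow> SOME q. q \<in> sQ A)"

definition symbol_part :: "('q, 'r) sca \<Rightarrow> ('q + 'r) list \<Rightarrow> 'r" where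
  "symbol_part A x = symbol_of A (tl x)"

definition pca_rule :: "('q, 'r) sca \<Rightarrow> ('q + 'r) list list \<Rightarrow> ('q + 'r) list list \<Rightarrow> ('q + 'r) list" where
  "pca_rule A xs ys =
     (let nb = (\<lambda>v. the (map_of (zip (pca_nbhd A) xs) v)) in
      if length (nb 0) = 1 then nb 0 @ hd ys
      else [Inl (sf A (map (state_part A \<circ> nb) (sV A)) (map (symbol_part A \<circ> nb) (sV' A)))])"

definition pca_of :: "('q, 'r) sca \<Rightarrow> (('q + 'r) list, ('q + 'r) list) sca" where
  "pca_of A =
     \<lparr>sQ = (\<lambda>q. [Inl q]) ` sQ A \<union> (\<lambda>(q, r). [Inl q, Inr r]) ` (sQ A \<times> sR A),
      sR = (\<lambda>r. [Inr r]) ` sR A, sV = pca_nbhd A, sV' = [0], sf = pca_rule A\<rparr>"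

definition pca_embed :: "'q list \<Rightarrow> ('q + 'r) list list" where
  "pca_embed xs = [map Inl xs]"

lemma set_pca_nbhd: "set (pca_nbhd A) = insert 0 (set (sV A) \<union> set (sV' A))"
  by (auto simp: pca_nbhd_def)

lemma state_part_in_states: "x \<in> sQ (pca_of A) \<Longrightarrow> state_part A x \<in> sQ A"
  by (auto simp: pca_of_def state_part_def)

lemma symbol_part_in_symbols:
  assumes "is_sca A" and "x \<in> sQ (pca_of A)"
  shows "symbol_part A x \<in> sR A"
proof -
  have "(SOME r. r \<in> sR A) \<in> sR A"
    using assms(1) unfolding is_sca_def by (simp add: some_in_eq)
  then show ?thesis
    using assms(2) by (auto simp: pca_of_def symbol_part_def symbol_of_def)
qed

lemma is_pca_pca_of:
  fixes A :: "('q, 'r) sca"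
  assumes "is_sca A"
  shows "is_pca (pca_of A)"
  unfolding is_pca_def is_sca_def
proof (intro conjI allI impI)
  show "finite (sQ (pca_of A))" "sQ (pca_of A) \<noteq> {}" "finite (sR (pca_of A))" "sR (pca_of A) \<noteq> {}"
    using assms by (auto simp: pca_of_def is_sca_def)
  show "distinct (sV (pca_of A))" "distinct (sV' (pca_of A))" "sV' (pca_of A) = [0]"
    by (simp_all add: pca_of_def pca_nbhd_def)
  fix xs ys :: "('q + 'r) list list"
  assume "length xs = length (sV (pca_of A)) \<and> set xs \<subseteq> sQ (pca_of A)
    \<and> length ys = length (sV' (pca_of A)) \<and> set ys \<subseteq> sR (pca_of A)"
  then have xs: "length xs = length (pca_nbhd A)" "set xs \<subseteq> sQ (pca_of A)"
    and ys: "ys = [hd ys]" "hd ys \<in> (\<lambda>r. [Inr r]) ` sR A"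
    by (auto simp: pca_of_def length_Suc_conv)
  define nb where "nb = (\<lambda>v. the (map_of (zip (pca_nbhd A) xs) v))"
  have nb: "nb v \<in> sQ (pca_of A)" if v: "v \<in> set (pca_nbhd A)" for v
  proof -
    obtain y where "map_of (zip (pca_nbhd A) xs) v = Some y"
      using v xs(1) by (cases "map_of (zip (pca_nbhd A) xs) v") simp_all
    then have "nb v \<in> set xs"
      unfolding nb_def by (auto dest: map_of_SomeD set_zip_rightD)
    then show ?thesis using xs(2) by blast
  qed
  have rule: "sf (pca_of A) xs ys = (if length (nb 0) = 1 then nb 0 @ hd ys
      else [Inl (sf A (map (state_part A \<circ> nb) (sV A)) (map (symbol_part A \<circ> nb) (sV' A)))])"
    by (simp add: pca_of_def pca_rule_def nb_def Let_def)
  show "sf (pca_of A) xs ys \<in> sQ (pca_of A)"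
  proof (cases "length (nb 0) = 1")
    case True
    then obtain q where "nb 0 = [Inl q]" "q \<in> sQ A"
      using nb[of 0] by (auto simp: set_pca_nbhd pca_of_def)
    then show ?thesis
      using True ys(2) rule by (auto simp: pca_of_def)
  next
    case False
    have "sf A (map (state_part A \<circ> nb) (sV A)) (map (symbol_part A \<circ> nb) (sV' A)) \<in> sQ A"
      using assms nb by (intro sf_map_in_states)
        (auto simp: set_pca_nbhd state_part_in_states symbol_part_in_symbols)
    then show ?thesis
      using False rule by (simp add: pca_of_def)
  qed
qed

lemma glob_pca_of:
  "glob (pca_of A) c s z =
    (if length (c z) = 1 then c z @ s z
     else [Inl (sf A (map (\<lambda>v. state_part A (c (z + v))) (sV A))
                     (map (\<lambda>v. symbol_part A (c (z + v))) (sV' A)))])"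
  by (simp add: glob_def pca_of_def pca_rule_def map_of_zip_map set_pca_nbhd cong: map_cong)

text \<open>A step of the rescaling \<open>\<langle>1,2,0\<rangle>\<close> of B uses two random symbols per cell, of which only
  the first is read.\<close>

definition pca_symbol_proj :: "('q, 'r) sca \<Rightarrow> ('q + 'r) list list list \<Rightarrow> 'r list list" where
  "pca_symbol_proj A x = [[symbol_of A (x ! 0 ! 0)]]"

lemma gR_rescale_pca_of:
  "gR (rescale (pca_of A) 1 2 0) = (\<lambda>(r, r'). [[[Inr r]], [[Inr r']]]) ` (sR A \<times> sR A)"
  by (auto simp: pca_of_def tuples_Suc_0 tuples_2 image_image)

lemma gF_rescale_pca_of:
  fixes A :: "('q, 'r) sca"
  assumes c: "c \<in> configs (gQ (rescale A 1 1 0))" and s: "s \<in> configs (gR (rescale (pca_of A) 1 2 0))"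
  shows "gF (rescale (pca_of A) 1 2 0) (pca_embed \<circ> c) s
    = pca_embed \<circ> gF (rescale A 1 1 0) c (pca_symbol_proj A \<circ> s)"
proof -
  define q where "q z = c z ! 0" for z
  define r where "r z = symbol_of A (s z ! 0 ! 0)" for z
  have c_eq: "pca_embed (c z) ! 0 = [Inl (q z)]" for z
  proof -
    have "c z \<in> tuples 1 (sQ A)"
      using c by (simp add: configs_def)
    then show ?thesis by (auto simp: tuples_Suc_0 pca_embed_def q_def)
  qed
  have s_eq: "s z ! 0 ! 0 = [Inr (r z)]" for z
  proof -
    have "s z \<in> gR (rescale (pca_of A) 1 2 0)"
      using s unfolding configs_def by blast
    then show ?thesis
      unfolding gR_rescale_pca_of by (auto simp: r_def symbol_of_def)
  qed
  have first: "glob (pca_of A) (\<lambda>z. pca_embed (c z) ! 0) (\<lambda>z. s z ! 0 ! 0)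
      = (\<lambda>z. [Inl (q z), Inr (r z)])"
    by (rule ext) (simp add: glob_pca_of c_eq s_eq)
  have second: "glob (pca_of A) (\<lambda>z. [Inl (q z), Inr (r z)]) s'
      = (\<lambda>z. [Inl (sf A (map (\<lambda>v. q (z + v)) (sV A)) (map (\<lambda>v. r (z + v)) (sV' A)))])" for s'
    by (rule ext) (simp add: glob_pca_of state_part_def symbol_part_def symbol_of_def)
  have "gF (rescale (pca_of A) 1 2 0) (pca_embed \<circ> c) s
      = (\<lambda>z. [glob (pca_of A) (glob (pca_of A) (\<lambda>z. pca_embed (c z) ! 0) (\<lambda>z. s z ! 0 ! 0))
                (\<lambda>z. s z ! 1 ! 0) z])"
    unfolding gF_rescale_width_1 by (simp add: numeral_2_eq_2)
  also have "\<dots> = pca_embed \<circ> gF (rescale A 1 1 0) c (pca_symbol_proj A \<circ> s)"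
    unfolding first second gF_rescale_width_1
    by (simp add: glob_def pca_embed_def pca_symbol_proj_def q_def r_def comp_def)
  finally show ?thesis .
qed

lemma pca_symbol_proj_image:
  "pca_symbol_proj A ` gR (rescale (pca_of A) 1 2 0) = gR (rescale A 1 1 0)"
  unfolding gR_rescale_pca_of
  by (force simp: tuples_Suc_0 pca_symbol_proj_def symbol_of_def image_image)

lemma pca_symbol_proj_in_configs:
  "s \<in> configs (gR (rescale (pca_of A) 1 2 0))
    \<Longrightarrow> pca_symbol_proj A \<circ> s \<in> configs (gR (rescale A 1 1 0))"
  using pca_symbol_proj_image by (fastforce simp: configs_def)

lemma card_pca_symbol_proj_fibre:
  assumes "y \<in> gR (rescale A 1 1 0)"
  shows "card (pca_symbol_proj A -` {y} \<inter> gR (rescale (pca_of A) 1 2 0)) = card (sR A)"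
proof -
  obtain r where y: "y = [[r]]" and "r \<in> sR A"
    using assms by (auto simp: tuples_Suc_0)
  then have "pca_symbol_proj A -` {y} \<inter> gR (rescale (pca_of A) 1 2 0)
      = (\<lambda>r'. [[[Inr r]], [[Inr r']]]) ` sR A"
    unfolding gR_rescale_pca_of by (auto simp: pca_symbol_proj_def symbol_of_def)
  then show ?thesis
    by (simp add: card_image inj_on_def)
qed

lemma gF_rescale_1_1_in_configs:
  assumes "is_sca A" and "c \<in> configs (gQ (rescale A 1 1 0))" and "s \<in> configs (gR (rescale A 1 1 0))"
  shows "gF (rescale A 1 1 0) c s \<in> configs (gQ (rescale A 1 1 0))"
proof -
  have cs: "c z \<in> tuples 1 (sQ A)" "s z \<in> tuples 1 (tuples 1 (sR A))" for z
    using assms(2,3) by (simp_all add: configs_def)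
  have "c z ! 0 \<in> sQ A" "s z ! 0 ! 0 \<in> sR A" for z
    using cs[of z] by (auto simp: tuples_Suc_0)
  then have "glob A (\<lambda>z. c z ! 0) (\<lambda>z. s z ! 0 ! 0) \<in> configs (sQ A)"
    using assms(1) by (intro glob_in_configs) (auto simp: configs_def)
  then show ?thesis
    unfolding gF_rescale_width_1 by (simp add: configs_def tuples_Suc_0)
qed

lemma measurable_gF_rescale_1_1:
  fixes A :: "('q, 'r) sca"
  assumes "is_sca A" and c: "c \<in> configs (gQ (rescale A 1 1 0))"
  shows "gF (rescale A 1 1 0) c \<in> PiM UNIV (\<lambda>_::int. uniform_count_measure (gR (rescale A 1 1 0)))
    \<rightarrow>\<^sub>M PiM UNIV (\<lambda>_::int. count_space (gQ (rescale A 1 1 0)))"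
proof -
  define h where "h z xs = [sf A (map (\<lambda>v. c (z + v) ! 0) (sV A)) (map (\<lambda>x. x ! 0 ! 0) xs)]"
    for z and xs :: "'r list list list"
  have "gF (rescale A 1 1 0) c = (\<lambda>s z. h z (map (\<lambda>v. s (z + v)) (sV' A)))"
    unfolding gF_rescale_width_1 by (simp add: fun_eq_iff glob_def h_def comp_def)
  moreover have "h z xs \<in> gQ (rescale A 1 1 0)"
    if "xs \<in> tuples (length (sV' A)) (gR (rescale A 1 1 0))" for z xs
  proof -
    have "c (z + v) \<in> tuples 1 (sQ A)" for v
      using c by (simp add: configs_def)
    then have "set (map (\<lambda>v. c (z + v) ! 0) (sV A)) \<subseteq> sQ A"
      by (auto intro: nth_in_tuples)
    moreover have "set (map (\<lambda>x. x ! 0 ! 0) xs) \<subseteq> sR A"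
      using that by (auto simp: tuples_def intro!: nth_in_tuples)
    ultimately show ?thesis
      using that \<open>is_sca A\<close> by (auto simp: is_sca_def h_def tuples_def)
  qed
  moreover have "finite (gR (rescale A 1 1 0))"
    using \<open>is_sca A\<close> by (simp add: is_sca_def tuples_Suc_0)
  ultimately show ?thesis
    by (simp add: measurable_local_rule)
qed

lemma is_restriction_pca_embed:
  fixes A :: "('q, 'r) sca"
  assumes "is_sca A"
  shows "is_restriction (rescale (pca_of A) 1 2 0) (gQ (rescale A 1 1 0))
    (pca_embed :: 'q list \<Rightarrow> ('q + 'r) list list)"
  unfolding is_restriction_def
proof (intro conjI ballI)
  show inj: "inj_on pca_embed (gQ (rescale A 1 1 0))"
    by (auto simp: inj_on_def pca_embed_def)
  show "pca_embed ` gQ (rescale A 1 1 0) \<subseteq> gQ (rescale (pca_of A) 1 2 0)"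
    by (auto simp: tuples_Suc_0 pca_embed_def pca_of_def)
  fix c :: "int \<Rightarrow> ('q + 'r) list list" and s
  assume c: "c \<in> configs (pca_embed ` gQ (rescale A 1 1 0))"
    and s: "s \<in> configs (gR (rescale (pca_of A) 1 2 0))"
  define c' where "c' = the_inv_into (gQ (rescale A 1 1 0)) pca_embed \<circ> c"
  have c': "c' \<in> configs (gQ (rescale A 1 1 0))" and c_eq: "c = pca_embed \<circ> c'"
    unfolding c'_def using configs_image_inj_on[OF inj c] by blast+
  show "gF (rescale (pca_of A) 1 2 0) c s \<in> configs (pca_embed ` gQ (rescale A 1 1 0))"
    using gF_rescale_pca_of[of c' A s] gF_rescale_1_1_in_configs[OF assms c']
      pca_symbol_proj_in_configs[OF s] c' s
    by (auto simp: c_eq configs_def)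
qed

lemma sgf_restrict_rescale_pca_of:
  fixes A :: "('q, 'r) sca"
  assumes A: "is_sca A" and c: "c \<in> configs (gQ (rescale A 1 1 0))"
  shows "sgf (rescale A 1 1 0) c
    = sgf (restrict (rescale (pca_of A) 1 2 0) (gQ (rescale A 1 1 0))
        (pca_embed :: 'q list \<Rightarrow> ('q + 'r) list list)) c"
proof (rule sym, rule sgf_eq_if_factors_through)
  show "finite (gR (restrict (rescale (pca_of A) 1 2 0) (gQ (rescale A 1 1 0)) pca_embed))"
    using A unfolding gR_restrict gR_rescale_pca_of by (simp add: is_sca_def)
  show "gR (rescale A 1 1 0) \<noteq> {}"
    using A by (simp add: is_sca_def tuples_Suc_0)
  show "pca_symbol_proj A ` gR (restrict (rescale (pca_of A) 1 2 0) (gQ (rescale A 1 1 0)) pca_embed)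
      = gR (rescale A 1 1 0)"
    unfolding gR_restrict by (rule pca_symbol_proj_image)
  show "card (pca_symbol_proj A -` {y}
      \<inter> gR (restrict (rescale (pca_of A) 1 2 0) (gQ (rescale A 1 1 0)) pca_embed)) = card (sR A)"
    if "y \<in> gR (rescale A 1 1 0)" for y
    unfolding gR_restrict using that by (rule card_pca_symbol_proj_fibre)
  show "gQ (restrict (rescale (pca_of A) 1 2 0) (gQ (rescale A 1 1 0)) pca_embed) = gQ (rescale A 1 1 0)"
    by (rule gQ_restrict)
  show "gF (rescale A 1 1 0) c \<in> PiM UNIV (\<lambda>_. uniform_count_measure (gR (rescale A 1 1 0)))
      \<rightarrow>\<^sub>M PiM UNIV (\<lambda>_. count_space (gQ (rescale A 1 1 0)))"
    using A c by (rule measurable_gF_rescale_1_1)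
  fix s
  assume "s \<in> configs (gR (restrict (rescale (pca_of A) 1 2 0) (gQ (rescale A 1 1 0)) pca_embed))"
  then have s: "s \<in> configs (gR (rescale (pca_of A) 1 2 0))"
    unfolding gR_restrict .
  show "gF (restrict (rescale (pca_of A) 1 2 0) (gQ (rescale A 1 1 0)) pca_embed) c s
      = gF (rescale A 1 1 0) c (pca_symbol_proj A \<circ> s)"
    using A c s pca_symbol_proj_in_configs[OF s]
    by (intro gF_restrict_eqI gF_rescale_pca_of gF_rescale_1_1_in_configs)
      (auto simp: inj_on_def pca_embed_def)
qed

theorem theorem3:
  fixes A :: "('q, 'r) sca"
  assumes "is_sca A"
  shows "\<exists>(B :: (('q + 'r) list, ('q + 'r) list) sca) i. is_pca B \<and> simulates_S A B i"
proof (intro exI conjI)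
  show "is_pca (pca_of A)"
    using assms by (rule is_pca_pca_of)
  show "simulates_S A (pca_of A) pca_embed"
    unfolding simulates_S_def
    using assms is_restriction_pca_embed sgf_restrict_rescale_pca_of
    by (intro exI[of _ 1] exI[of _ 2] exI[of _ 0]) auto
qed

end
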